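(* For every integer $n \ge 5$, $\gamma_R(P(n,2)) \le \left\lceil \frac{8n}{7}\right\rceil$.
   Context: For integers $n \ge 3$ and $1 \le k < n/2$, the generalized Petersen graph $P(n,k)$ has vertex set $\{v_i, u_i : 0 \le i \le n-1\}$ and edge set $\{v_iv_{i+1},\ v_iu_i,\ u_iu_{i+k} : 0 \le i \le n-1\}$, with subscripts taken modulo $n$. A Roman domination function (RDF) of a graph $G$ is a function $f: V(G)\to\{0,1,2\}$ such that every vertex $u$ with $f(u)=0$ is adjacent to at least one vertex $v$ with $f(v)=2$. Its weight is $\sum_{u\in V(G)} f(u)$. The Roman domination number $\gamma_R(G)$ is the minimum weight of an RDF of $G$. *)

theory Defs
  imports Complex_Main
begin

text \<open>Vertices of the generalized Petersen graph P(n,k): outer v_i and inner u_i,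
  with indices i < n.\<close>
datatype gpvert = Outer nat | Inner nat

definition gp_verts :: "nat \<Rightarrow> gpvert set" where
  "gp_verts n = Outer ` {..<n} \<union> Inner ` {..<n}"

definition gp_edges :: "nat \<Rightarrow> nat \<Rightarrow> (gpvert \<times> gpvert) set" where
  "gp_edges n k =
     (\<Union>i<n. {(Outer i, Outer ((i + 1) mod n)), (Outer i, Inner i),
              (Inner i, Inner ((i + k) mod n))})"

definition gp_adj :: "nat \<Rightarrow> nat \<Rightarrow> gpvert \<Rightarrow> gpvert \<Rightarrow> bool" where
  "gp_adj n k x y \<longleftrightarrow> (x, y) \<in> gp_edges n k \<or> (y, x) \<in> gp_edges n k"

definition is_RDF :: "'a set \<Rightarrow> ('a \<Rightarrow> 'a \<Rightarrow> bool) \<Rightarrow> ('a \<Rightarrow> nat) \<Rightarrow> bool" where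
  "is_RDF V E f \<longleftrightarrow> (\<forall>x\<in>V. f x \<le> 2) \<and>
     (\<forall>x\<in>V. f x = 0 \<longrightarrow> (\<exists>y\<in>V. E x y \<and> f y = 2))"

definition RDF_weight :: "'a set \<Rightarrow> ('a \<Rightarrow> nat) \<Rightarrow> nat" where
  "RDF_weight V f = (\<Sum>x\<in>V. f x)"

definition roman_domination_number :: "'a set \<Rightarrow> ('a \<Rightarrow> 'a \<Rightarrow> bool) \<Rightarrow> nat" where
  "roman_domination_number V E = (LEAST w. \<exists>f. is_RDF V E f \<and> RDF_weight V f = w)"

end

theory Submission
  imports Defs
begin

(* A labelling of P(n,2) is encoded as a cyclic word w of length n over columns (a,b): a is the
   value on the outer vertex v_i and b the value on the inner vertex u_i.  The Roman condition at
   column i only involves columns i-2,...,i+2, so a word gives a Roman domination function as soon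
   as every cyclic window of five consecutive columns passes a local test (roman_window).

   Finally, with the 7-column block of weight 8
      outer 2 0 1 0 0 1 0 / inner 0 0 0 2 2 0 0
   and one explicitly checked tail for each residue of n mod 7, the word block^m @ tail has length
   n and weight at most ceil(8n/7), which gives the theorem. *)

definition cyc :: "'a list \<Rightarrow> nat \<Rightarrow> 'a" where
  "cyc w i = w ! (i mod length w)"

definition window :: "nat \<Rightarrow> 'a list \<Rightarrow> nat \<Rightarrow> 'a list" where
  "window W w i = map (\<lambda>j. cyc w (i + j)) [0..<W]"

definition windows_ok :: "nat \<Rightarrow> ('a list \<Rightarrow> bool) \<Rightarrow> 'a list \<Rightarrow> bool" where
  "windows_ok W Q w \<longleftrightarrow> (\<forall>i<length w. Q (window W w i))"

lemma windows_ok_upt: "windows_ok W Q w \<longleftrightarrow> list_all (\<lambda>i. Q (window W w i)) [0..<length w]"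
  by (auto simp: windows_ok_def list_all_iff)

lemma window_mod: "window W w (i mod length w) = window W w i"
  unfolding window_def cyc_def by (simp add: mod_add_left_eq)

lemma length_concat_replicate: "length (concat (replicate m P)) = m * length P"
  by (induction m) simp_all

lemma nth_concat_replicate:
  "x < m * length P \<Longrightarrow> concat (replicate m P) ! x = P ! (x mod length P)"
proof (induction m arbitrary: x)
  case (Suc m)
  show ?case
  proof (cases "x < length P")
    case False
    then have "concat (replicate m P) ! (x - length P) = P ! ((x - length P) mod length P)"
      using Suc by (intro Suc.IH) auto
    with False show ?thesis by (simp add: nth_append le_mod_geq)
  qed (simp add: nth_append)
qed simp

lemma nth_pumped:
  "x < m * length P + length T \<Longrightarrow> (concat (replicate m P) @ T) ! x =
     (if x < m * length P then P ! (x mod length P) else T ! (x - m * length P))"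
  by (simp add: nth_append length_concat_replicate nth_concat_replicate)

lemma cyc_nth: "z < length w \<Longrightarrow> cyc w z = w ! z"
  by (simp add: cyc_def)

lemma cyc_wrap: "length w \<le> z \<Longrightarrow> z < 2 * length w \<Longrightarrow> cyc w z = w ! (z - length w)"
  by (simp add: cyc_def le_mod_geq)

lemma cyc_pumped_prefix:
  assumes "x < m * length P"
  shows "cyc (concat (replicate m P) @ T) x = cyc P x"
  using assms by (simp add: cyc_def nth_pumped length_concat_replicate)

lemma cyc_pumped_shift:
  assumes m: "m \<ge> 1" and x: "x < length (P @ T) + length P"
  shows "cyc (concat (replicate m P) @ T) (x + (m - 1) * length P) = cyc (P @ T) x"
proof -
  define p where "p = length P"
  define L where "L = length T"
  define y where "y = x + (m - 1) * p"
  define w where "w = concat (replicate m P) @ T"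
  have mp: "m * p = (m - 1) * p + p"
    using m by (cases m) simp_all
  have lens: "length w = m * p + L" "length (P @ T) = p + L"
    by (simp_all add: w_def length_concat_replicate p_def L_def)
  have nth_w: "w ! z = (if z < m * p then P ! (z mod p) else T ! (z - m * p))" if "z < m * p + L" for z
    using that nth_pumped[of z m P T] by (simp add: w_def p_def L_def)
  consider "x < p" | "p \<le> x" "x < p + L" | "p + L \<le> x"
    by linarith
  then have "cyc w y = cyc (P @ T) x"
  proof cases
    case 1
    then have "y < m * p" "y mod p = x" using mp by (auto simp: y_def)
    then have "cyc w y = P ! x" using lens nth_w by (simp add: cyc_nth)
    also have "\<dots> = cyc (P @ T) x" using 1 lens by (simp add: cyc_nth nth_append p_def)
    finally show ?thesis .
  next
    case 2
    then have "m * p \<le> y" "y < m * p + L" "y - m * p = x - p" using mp by (auto simp: y_def)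
    then have "cyc w y = T ! (x - p)" using lens nth_w by (simp add: cyc_nth)
    also have "\<dots> = cyc (P @ T) x" using 2 lens by (simp add: cyc_nth nth_append p_def)
    finally show ?thesis .
  next
    case 3
    then have wrap: "x - (p + L) < p" "x - (p + L) < m * p"
      using mp x lens by (auto simp: p_def)
    have "length w \<le> y" "y < 2 * length w" "y - length w = x - (p + L)"
      using 3 mp x lens by (auto simp: y_def p_def)
    then have "cyc w y = P ! (x - (p + L))" using lens nth_w wrap by (simp add: cyc_wrap)
    also have "\<dots> = cyc (P @ T) x" using 3 x lens wrap by (simp add: cyc_wrap nth_append p_def)
    finally show ?thesis .
  qed
  then show ?thesis by (simp add: w_def y_def p_def)
qed

text \<open>Pumping lemma: every window of P^m @ T is a window of P or of P @ T, provided the window is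
  at most one column longer than P.\<close>
lemma windows_ok_pumped:
  assumes W: "W \<le> length P + 1" and m: "m \<ge> 1"
    and ok_P: "windows_ok W Q P" and ok_PT: "windows_ok W Q (P @ T)"
  shows "windows_ok W Q (concat (replicate m P) @ T)"
  unfolding windows_ok_def
proof (intro allI impI)
  define p where "p = length P"
  define w where "w = concat (replicate m P) @ T"
  fix i assume i: "i < length (concat (replicate m P) @ T)"
  have len: "length w = (m - 1) * p + length (P @ T)"
    using m by (cases m) (simp_all add: w_def p_def length_concat_replicate)
  show "Q (window W w i)"
  proof (cases "i < (m - 1) * p")
    case True
    then have "i + W \<le> m * p"
      using W m by (cases m) (simp_all add: p_def)
    then have "window W w i = window W P i"
      by (simp add: window_def w_def cyc_pumped_prefix p_def)
    also have "\<dots> = window W P (i mod p)"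
      by (simp add: window_mod p_def)
    finally have "window W w i = window W P (i mod p)" .
    moreover have "i mod p < p"
      using True by (cases "p = 0") simp_all
    ultimately show ?thesis
      using ok_P by (simp add: windows_ok_def p_def)
  next
    case False
    define i' where "i' = i - (m - 1) * p"
    have i': "i' < length (P @ T)" "i = i' + (m - 1) * p"
      using False i len by (simp_all add: i'_def w_def)
    have "window W w i = window W (P @ T) i'"
      unfolding window_def
    proof (intro map_cong refl)
      fix j assume "j \<in> set [0..<W]"
      then have "i' + j < length (P @ T) + length P" using i' W by (simp add: p_def)
      then have "cyc w ((i' + j) + (m - 1) * length P) = cyc (P @ T) (i' + j)"
        unfolding w_def by (rule cyc_pumped_shift[OF m])
      moreover have "i + j = (i' + j) + (m - 1) * length P"
        using i'(2) by (simp add: p_def)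
      ultimately show "cyc w (i + j) = cyc (P @ T) (i' + j)"
        by (simp add: add_ac)
    qed
    then show ?thesis
      using ok_PT i' by (simp add: windows_ok_def)
  qed
qed

lemma mod_pred_succ:
  fixes k n d :: nat
  assumes "k < n" "d \<le> n"
  shows "((k + n - d) mod n + d) mod n = k"
proof -
  have "((k + n - d) mod n + d) mod n = (k + n - d + d) mod n"
    by (simp add: mod_add_left_eq)
  then show ?thesis
    using assms by simp
qed

lemma gp_edges_intro:
  assumes "i < n"
  shows "(Outer i, Outer ((i + 1) mod n)) \<in> gp_edges n s"
    and "(Outer i, Inner i) \<in> gp_edges n s"
    and "(Inner i, Inner ((i + s) mod n)) \<in> gp_edges n s"
  using assms unfolding gp_edges_def by blast+

lemma gp_adj_sym: "gp_adj n s x y \<Longrightarrow> gp_adj n s y x"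
  by (auto simp: gp_adj_def)

lemma gp_adj_outer:
  assumes "k < n"
  shows "gp_adj n s (Outer k) (Outer ((k + 1) mod n))"
    and "gp_adj n s (Outer k) (Outer ((k + n - 1) mod n))"
proof -
  show "gp_adj n s (Outer k) (Outer ((k + 1) mod n))"
    using gp_edges_intro(1)[OF assms] by (simp add: gp_adj_def)
  have "(k + n - 1) mod n < n" "((k + n - 1) mod n + 1) mod n = k"
    using assms mod_pred_succ[of k n 1] by simp_all
  then have "gp_adj n s (Outer ((k + n - 1) mod n)) (Outer k)"
    using gp_edges_intro(1) unfolding gp_adj_def by metis
  then show "gp_adj n s (Outer k) (Outer ((k + n - 1) mod n))"
    by (rule gp_adj_sym)
qed

lemma gp_adj_inner:
  assumes "k < n" "s \<le> n"
  shows "gp_adj n s (Inner k) (Inner ((k + s) mod n))"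
    and "gp_adj n s (Inner k) (Inner ((k + n - s) mod n))"
proof -
  show "gp_adj n s (Inner k) (Inner ((k + s) mod n))"
    using gp_edges_intro(3)[OF assms(1)] by (simp add: gp_adj_def)
  have "(k + n - s) mod n < n" "((k + n - s) mod n + s) mod n = k"
    using assms mod_pred_succ[of k n s] by simp_all
  then have "gp_adj n s (Inner ((k + n - s) mod n)) (Inner k)"
    using gp_edges_intro(3) unfolding gp_adj_def by metis
  then show "gp_adj n s (Inner k) (Inner ((k + n - s) mod n))"
    by (rule gp_adj_sym)
qed

lemma gp_adj_spoke: "k < n \<Longrightarrow> gp_adj n s (Outer k) (Inner k) \<and> gp_adj n s (Inner k) (Outer k)"
  using gp_edges_intro(2) by (auto simp: gp_adj_def)

text \<open>The local Roman test on five consecutive columns, centred at column 2: values are at most 2,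
  a zero outer value needs a 2 on an outer neighbour (columns 1, 3) or on the spoke, a zero
  inner value needs a 2 on an inner neighbour (columns 0, 4) or on the spoke.\<close>
definition roman_window :: "(nat \<times> nat) list \<Rightarrow> bool" where
  "roman_window c \<longleftrightarrow> fst (c!2) \<le> 2 \<and> snd (c!2) \<le> 2 \<and>
     (fst (c!2) = 0 \<longrightarrow> fst (c!1) = 2 \<or> fst (c!3) = 2 \<or> snd (c!2) = 2) \<and>
     (snd (c!2) = 0 \<longrightarrow> snd (c!0) = 2 \<or> snd (c!4) = 2 \<or> fst (c!2) = 2)"

definition word_labelling :: "(nat \<times> nat) list \<Rightarrow> gpvert \<Rightarrow> nat" where
  "word_labelling w v = (case v of Outer i \<Rightarrow> fst (w ! i) | Inner i \<Rightarrow> snd (w ! i))"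

lemma word_labelling_simps [simp]:
  "word_labelling w (Outer i) = fst (w ! i)" "word_labelling w (Inner i) = snd (w ! i)"
  by (simp_all add: word_labelling_def)

lemma nth_window: "j < W \<Longrightarrow> window W w i ! j = cyc w (i + j)"
  by (simp add: window_def)

lemma cyc_add_period: "cyc w (x + length w) = cyc w x"
  by (simp add: cyc_def)

lemma windows_ok_roman_local:
  assumes ok: "windows_ok 5 roman_window w" and k: "k < length w" and len: "2 \<le> length w"
  defines "n \<equiv> length w"
  shows "fst (w ! k) \<le> 2 \<and> snd (w ! k) \<le> 2 \<and>
     (fst (w ! k) = 0 \<longrightarrow> fst (w ! ((k + n - 1) mod n)) = 2 \<or> fst (w ! ((k + 1) mod n)) = 2 \<or> snd (w ! k) = 2) \<and>
     (snd (w ! k) = 0 \<longrightarrow> snd (w ! ((k + n - 2) mod n)) = 2 \<or> snd (w ! ((k + 2) mod n)) = 2 \<or> fst (w ! k) = 2)"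
proof -
  define c where "c = window 5 w ((k + n - 2) mod n)"
  have "(k + n - 2) mod n < n"
    using len unfolding n_def by (intro mod_less_divisor) linarith
  then have "roman_window c"
    using ok by (simp add: windows_ok_def c_def n_def)
  have idx: "k + n - 2 + 1 = (k + n - 1)" "k + n - 2 + 2 = k + n"
    "k + n - 2 + 3 = (k + 1) + n" "k + n - 2 + 4 = (k + 2) + n"
    using len by (simp_all add: n_def)
  have "c ! j = cyc w (k + n - 2 + j)" if "j < 5" for j
    using that by (simp add: c_def nth_window cyc_def mod_add_left_eq n_def)
  then have "c ! 0 = cyc w (k + n - 2)" "c ! 1 = cyc w (k + n - 1)" "c ! 2 = cyc w (k + n)"
    "c ! 3 = cyc w ((k + 1) + n)" "c ! 4 = cyc w ((k + 2) + n)"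
    by (simp_all only: idx) simp_all
  moreover have per: "cyc w (x + n) = cyc w x" for x
    unfolding n_def by (rule cyc_add_period)
  ultimately have "c ! 0 = w ! ((k + n - 2) mod n)" "c ! 1 = w ! ((k + n - 1) mod n)"
    "c ! 2 = w ! k" "c ! 3 = w ! ((k + 1) mod n)" "c ! 4 = w ! ((k + 2) mod n)"
    by (simp_all only: per) (use k in \<open>simp_all add: cyc_def n_def\<close>)
  with \<open>roman_window c\<close> show ?thesis
    by (simp add: roman_window_def)
qed

lemma windows_ok_is_RDF:
  assumes ok: "windows_ok 5 roman_window w" and len: "2 \<le> length w"
  shows "is_RDF (gp_verts (length w)) (gp_adj (length w) 2) (word_labelling w)"
  unfolding is_RDF_def
proof (intro conjI ballI impI)
  define n where "n = length w"
  have "j mod n < n" for j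
    using len unfolding n_def by (intro mod_less_divisor) linarith
  then have verts: "Outer (j mod n) \<in> gp_verts n" "Inner (j mod n) \<in> gp_verts n" for j
    unfolding gp_verts_def by blast+
  fix v assume "v \<in> gp_verts (length w)"
  then obtain k where k: "k < n" and v: "v = Outer k \<or> v = Inner k"
    by (auto simp: gp_verts_def n_def)
  have k_mod: "k mod n = k" using k by simp
  note local = windows_ok_roman_local[OF ok k[unfolded n_def] len, folded n_def]
  show "word_labelling w v \<le> 2"
    using v local by auto
  assume zero: "word_labelling w v = 0"
  show "\<exists>y\<in>gp_verts (length w). gp_adj (length w) 2 v y \<and> word_labelling w y = 2"
    unfolding n_def[symmetric] using v
  proof
    assume v: "v = Outer k"
    have "fst (w ! ((k + n - 1) mod n)) = 2 \<or> fst (w ! ((k + 1) mod n)) = 2 \<or> snd (w ! k) = 2"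
      using zero local v by simp
    then show "\<exists>y\<in>gp_verts n. gp_adj n 2 v y \<and> word_labelling w y = 2"
      using v gp_adj_outer[OF k, of 2] gp_adj_spoke[OF k, of 2] verts[of "k + n - 1"] verts[of "k + 1"] verts[of k]
      unfolding k_mod by (metis word_labelling_simps)
  next
    assume v: "v = Inner k"
    have "snd (w ! ((k + n - 2) mod n)) = 2 \<or> snd (w ! ((k + 2) mod n)) = 2 \<or> fst (w ! k) = 2"
      using zero local v by simp
    moreover have "2 \<le> n" using len by (simp add: n_def)
    ultimately show "\<exists>y\<in>gp_verts n. gp_adj n 2 v y \<and> word_labelling w y = 2"
      using v gp_adj_inner[OF k, of 2] gp_adj_spoke[OF k, of 2] verts[of "k + n - 2"] verts[of "k + 2"] verts[of k]
      unfolding k_mod by (metis word_labelling_simps)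
  qed
qed

definition word_weight :: "(nat \<times> nat) list \<Rightarrow> nat" where
  "word_weight w = (\<Sum>c\<leftarrow>w. fst c + snd c)"

lemma RDF_weight_word_labelling:
  "RDF_weight (gp_verts (length w)) (word_labelling w) = word_weight w"
proof -
  define n where "n = length w"
  have "RDF_weight (gp_verts n) (word_labelling w)
      = (\<Sum>v\<in>Outer ` {..<n}. word_labelling w v) + (\<Sum>v\<in>Inner ` {..<n}. word_labelling w v)"
    unfolding RDF_weight_def gp_verts_def by (rule sum.union_disjoint) auto
  also have "\<dots> = (\<Sum>i<n. fst (w ! i)) + (\<Sum>i<n. snd (w ! i))"
    by (simp add: sum.reindex inj_on_def)
  also have "\<dots> = word_weight w"
    by (simp add: word_weight_def sum_list_sum_nth atLeast0LessThan sum.distrib n_def)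
  finally show ?thesis
    by (simp add: n_def)
qed

lemma word_weight_pumped:
  "word_weight (concat (replicate m P) @ T) = m * word_weight P + word_weight T"
  by (induction m) (simp_all add: word_weight_def)

lemma roman_domination_number_le:
  "is_RDF V E f \<Longrightarrow> roman_domination_number V E \<le> RDF_weight V f"
  unfolding roman_domination_number_def by (rule Least_le) blast

lemma ceiling_bound:
  fixes a n :: nat
  assumes "7 * a < 8 * n + 7"
  shows "int a \<le> \<lceil>8 * real n / 7\<rceil>"
proof -
  have "real a - 1 < 8 * real n / 7"
    using assms by (simp add: field_simps)
  then show ?thesis
    by (simp add: le_ceiling_iff)
qed

definition block :: "(nat \<times> nat) list" where
  "block = [(2,0), (0,0), (1,0), (0,2), (0,2), (1,0), (0,0)]"

lemma block_props: "length block = 7" "word_weight block = 8" "windows_ok 5 roman_window block"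
  unfolding block_def windows_ok_upt by code_simp+

lemma extend_tail:
  assumes ok_block_T: "windows_ok 5 roman_window (block @ T)"
    and ok_T: "m = 0 \<Longrightarrow> windows_ok 5 roman_window T"
    and weight_T: "7 * word_weight T < 8 * length T + 7"
    and n: "n = 7 * m + length T"
  shows "\<exists>w. length w = n \<and> windows_ok 5 roman_window w \<and> 7 * word_weight w < 8 * n + 7"
proof (intro exI conjI)
  define w where "w = concat (replicate m block) @ T"
  show "length w = n"
    using n by (simp add: w_def length_concat_replicate block_props)
  show "windows_ok 5 roman_window w"
  proof (cases "m = 0")
    case False
    then show ?thesis
      using windows_ok_pumped[of 5 block m roman_window T] ok_block_T
      by (simp add: w_def block_props)
  qed (simp add: w_def ok_T)
  show "7 * word_weight w < 8 * n + 7"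
    using weight_T n by (simp add: w_def word_weight_pumped block_props)
qed

text \<open>One tail for each residue r of n mod 7.  The tail for r = 4 has length 11, so for
  n = 7m + 4 it is combined with m - 1 copies of the block.\<close>
definition tail :: "nat \<Rightarrow> (nat \<times> nat) list" where
  "tail r = [[],
    [(2,0)],
    [(2,0), (0,1)],
    [(2,0), (0,1), (0,1)],
    [(2,0), (0,0), (0,2), (0,2), (0,0), (2,0), (0,0), (0,2), (0,2), (1,0), (0,0)],
    [(2,0), (0,0), (0,2), (0,2), (0,0)],
    [(2,0), (0,0), (0,2), (0,2), (1,0), (0,0)]] ! r"

lemma tails_checked:
  "list_all (\<lambda>r. length (tail r) mod 7 = r \<and> length (tail r) \<le> 11
    \<and> list_all (\<lambda>i. roman_window (window 5 (block @ tail r) i)) [0..<length (block @ tail r)]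
    \<and> (5 \<le> length (tail r) \<longrightarrow> list_all (\<lambda>i. roman_window (window 5 (tail r) i)) [0..<length (tail r)])
    \<and> 7 * word_weight (tail r) < 8 * length (tail r) + 7) [0..<7]"
  unfolding tail_def block_def by code_simp

lemma tail_table:
  assumes "r < 7"
  shows "length (tail r) mod 7 = r \<and> length (tail r) \<le> 11
    \<and> windows_ok 5 roman_window (block @ tail r)
    \<and> (5 \<le> length (tail r) \<longrightarrow> windows_ok 5 roman_window (tail r))
    \<and> 7 * word_weight (tail r) < 8 * length (tail r) + 7"
  using tails_checked assms by (simp add: list_all_iff windows_ok_upt)

lemma same_residue_split:
  fixes n L :: nat
  assumes "L mod 7 = n mod 7" "L \<le> 11" "5 \<le> n"
  shows "\<exists>m. n = 7 * m + L"
proof -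
  have "L \<le> n"
  proof (rule ccontr)
    assume "\<not> L \<le> n"
    then have "7 dvd (L - n)" "0 < L - n"
      using assms(1) mod_eq_dvd_iff_nat[of n L 7] by simp_all
    then have "7 \<le> L - n"
      by (rule dvd_imp_le)
    then show False
      using assms by linarith
  qed
  then have "7 dvd (n - L)"
    using assms(1) mod_eq_dvd_iff_nat[of L n 7] by simp
  then show ?thesis
    using \<open>L \<le> n\<close> by (metis add.commute dvd_def le_add_diff_inverse)
qed

lemma good_word_exists:
  assumes "n \<ge> 5"
  shows "\<exists>w. length w = n \<and> windows_ok 5 roman_window w \<and> 7 * word_weight w < 8 * n + 7"
proof -
  define T where "T = tail (n mod 7)"
  have T: "length T mod 7 = n mod 7" "length T \<le> 11" "windows_ok 5 roman_window (block @ T)"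
    "5 \<le> length T \<Longrightarrow> windows_ok 5 roman_window T" "7 * word_weight T < 8 * length T + 7"
    using tail_table[of "n mod 7"] unfolding T_def[symmetric] by simp_all
  obtain m where m: "n = 7 * m + length T"
    using same_residue_split[OF T(1,2) assms] by blast
  show ?thesis
  proof (rule extend_tail[OF T(3) _ T(5) m])
    assume "m = 0"
    then show "windows_ok 5 roman_window T"
      using T(4) m assms by simp
  qed
qed

theorem lemma2p1:
  fixes n :: nat
  assumes "n \<ge> 5"
  shows "int (roman_domination_number (gp_verts n) (gp_adj n 2)) \<le> \<lceil>8 * real n / 7\<rceil>"
proof -
  obtain w where w: "length w = n" "windows_ok 5 roman_window w" "7 * word_weight w < 8 * n + 7"
    using good_word_exists[OF assms] by blast
  have "is_RDF (gp_verts n) (gp_adj n 2) (word_labelling w)"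
    using windows_ok_is_RDF[OF w(2)] w(1) assms by simp
  then have "roman_domination_number (gp_verts n) (gp_adj n 2) \<le> word_weight w"
    using roman_domination_number_le RDF_weight_word_labelling w(1) by metis
  then show ?thesis
    using ceiling_bound[OF w(3)] by linarith
qed

end
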